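(* For every $i\in\{1,\dots,m-1\}$, every real $\varphi$ and every real $d$ (of either sign), there exist finite activation sequences (compositions of the moves $f_1(\cdot),\dots,f_m(\cdot)$ with positive arguments) realizing $h_i(\varphi)$ and $g_i(d)$, respectively.
   Context: A swarm of $n$ planar robots; robot $j$ has state $(x_j,y_j,\theta_j)$, $\theta_j$ mod $2\pi$; all robots have the same turning radius $r>0$. Groups $G_1,\dots,G_m$ with activation vectors $\alpha_i\in\{0,1\}^n$ ($\alpha_{i,j}=1$ iff robot $j\in G_i$); the patterns $(\alpha_{1,j},\dots,\alpha_{m-1,j})$ are pairwise distinct, none all zeros, none all ones; $G_m=\emptyset$. Dynamics: one group $\nu(t)$ active at a time, input $u(t)>0$; with $a_j=\alpha_{\nu(t),j}$: $\dot x_j=a_j\cos\theta_j u$, $\dot y_j=a_j\sin\theta_j u$, $\dot\theta_j=(1-a_j)u/r$. For $i<m$, $d>0$: $f_i(d)$ = activate $G_i$ with $\int u\,dt=d$ (members translate $d$ along heading, non-members rotate in place by $d/r$). For $\varphi>0$: $f_m(\varphi)$ = activate $G_m$ with $\int u\,dt=r\varphi$ (all robots rotate in place by $\varphi$). $h_i(\varphi)$: net effect in which members of $G_i$ are unchanged and non-members keep their positions with orientation increased by $\varphi$ mod $2\pi$. $g_i(d)$: net effect in which each member $j$ of $G_i$ is translated by $d(\cos\theta_j,\sin\theta_j)$ with unchanged orientation and non-members are unchanged. *)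

theory Defs
  imports Complex_Main
begin

(* Robots are indexed by a finite type 'r.  A configuration assigns to each robot
   its state (x, y, theta); theta is a real representative of an angle mod 2 pi. *)
type_synonym 'r config = "'r \<Rightarrow> real \<times> real \<times> real"

(* alpha i j: robot j belongs to group G_i  (groups indexed 1..m) *)

definition move :: "(nat \<Rightarrow> 'r \<Rightarrow> bool) \<Rightarrow> nat \<Rightarrow> real \<Rightarrow> nat \<Rightarrow> real \<Rightarrow> 'r config \<Rightarrow> 'r config" where
  "move \<alpha> m r k t c = (\<lambda>j. (case c j of (x, y, \<theta>) \<Rightarrow>
      if k = m then (x, y, \<theta> + t)
      else if \<alpha> k j then (x + t * cos \<theta>, y + t * sin \<theta>, \<theta>)
      else (x, y, \<theta> + t / r)))"

definition exec_seq :: "(nat \<Rightarrow> 'r \<Rightarrow> bool) \<Rightarrow> nat \<Rightarrow> real \<Rightarrow> (nat \<times> real) list \<Rightarrow> 'r config \<Rightarrow> 'r config" where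
  "exec_seq \<alpha> m r s c = foldl (\<lambda>c' (k, t). move \<alpha> m r k t c') c s"

definition admissible_seq :: "nat \<Rightarrow> (nat \<times> real) list \<Rightarrow> bool" where
  "admissible_seq m s = (\<forall>(k, t) \<in> set s. 1 \<le> k \<and> k \<le> m \<and> t > 0)"

definition angle_eq :: "real \<Rightarrow> real \<Rightarrow> bool" where
  "angle_eq a b = (\<exists>k::int. a - b = 2 * pi * of_int k)"

definition config_eq :: "'r config \<Rightarrow> 'r config \<Rightarrow> bool" where
  "config_eq c c' = (\<forall>j. fst (c j) = fst (c' j) \<and> fst (snd (c j)) = fst (snd (c' j))
                        \<and> angle_eq (snd (snd (c j))) (snd (snd (c' j))))"

definition h_eff :: "(nat \<Rightarrow> 'r \<Rightarrow> bool) \<Rightarrow> nat \<Rightarrow> real \<Rightarrow> 'r config \<Rightarrow> 'r config" where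
  "h_eff \<alpha> i \<phi> c = (\<lambda>j. (case c j of (x, y, \<theta>) \<Rightarrow>
      if \<alpha> i j then (x, y, \<theta>) else (x, y, \<theta> + \<phi>)))"

definition g_eff :: "(nat \<Rightarrow> 'r \<Rightarrow> bool) \<Rightarrow> nat \<Rightarrow> real \<Rightarrow> 'r config \<Rightarrow> 'r config" where
  "g_eff \<alpha> i d c = (\<lambda>j. (case c j of (x, y, \<theta>) \<Rightarrow>
      if \<alpha> i j then (x + d * cos \<theta>, y + d * sin \<theta>, \<theta>) else (x, y, \<theta>)))"

definition realizes :: "(nat \<Rightarrow> 'r \<Rightarrow> bool) \<Rightarrow> nat \<Rightarrow> real \<Rightarrow> ('r config \<Rightarrow> 'r config) \<Rightarrow> bool" where
  "realizes \<alpha> m r F = (\<exists>s. admissible_seq m s \<and> (\<forall>c. config_eq (exec_seq \<alpha> m r s c) (F c)))"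

end

theory Submission
  imports Defs
begin

text \<open>
  Activating \<open>G\<^sub>i\<close> for distance \<open>D\<close>, turning everybody by \<open>\<pi>\<close>, activating \<open>G\<^sub>i\<close> for \<open>D\<close>
  again and turning by \<open>\<pi>\<close> once more brings every member of \<open>G\<^sub>i\<close> back to its start,
  while every non-member has turned by \<open>2D/r\<close> modulo \<open>2\<pi>\<close>; since \<open>D > 0\<close> is free,
  this realizes \<open>h\<^sub>i(\<phi>)\<close>.  A single move \<open>f\<^sub>i(d)\<close> is \<open>g\<^sub>i(d)\<close> followed by \<open>h\<^sub>i(d/r)\<close>, and
  \<open>f\<^sub>m(\<pi>) f\<^sub>i(-d) f\<^sub>m(\<pi>)\<close> is \<open>g\<^sub>i(d)\<close> followed by \<open>h\<^sub>i(-d/r)\<close> for \<open>d < 0\<close>; appending the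
  inverse rotation of the non-members yields \<open>g\<^sub>i(d)\<close>; this composition is legitimate
  because \<open>h\<^sub>i\<close> respects equality of headings modulo \<open>2\<pi>\<close>.
\<close>

lemma angle_eq_refl [simp]: "angle_eq a a"
  by (auto simp: angle_eq_def intro: exI[of _ 0])

lemma angle_eq_sym:
  assumes "angle_eq a b"
  shows "angle_eq b a"
proof -
  obtain k :: int where "a - b = 2 * pi * of_int k"
    using assms by (auto simp: angle_eq_def)
  then have "b - a = 2 * pi * of_int (- k)"
    by simp
  then show ?thesis
    unfolding angle_eq_def ..
qed

lemma angle_eq_trans:
  assumes "angle_eq a b" "angle_eq b c"
  shows "angle_eq a c"
proof -
  obtain k l :: int where "a - b = 2 * pi * of_int k" "b - c = 2 * pi * of_int l"
    using assms by (auto simp: angle_eq_def)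
  then have "a - c = 2 * pi * of_int (k + l)"
    by (simp add: algebra_simps)
  then show ?thesis
    unfolding angle_eq_def ..
qed

lemma angle_eq_add:
  assumes "angle_eq a b" "angle_eq c d"
  shows "angle_eq (a + c) (b + d)"
proof -
  obtain k l :: int where "a - b = 2 * pi * of_int k" "c - d = 2 * pi * of_int l"
    using assms by (auto simp: angle_eq_def)
  then have "(a + c) - (b + d) = 2 * pi * of_int (k + l)"
    by (simp add: algebra_simps)
  then show ?thesis
    unfolding angle_eq_def ..
qed

lemma angle_eq_add_2pi_int: "angle_eq (a + 2 * pi * of_int k) a"
  by (simp add: angle_eq_def)

lemma angle_eq_add_2pi [simp]: "angle_eq (a + 2 * pi) b \<longleftrightarrow> angle_eq a b"
proof -
  have "angle_eq (a + 2 * pi) a"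
    using angle_eq_add_2pi_int [of a 1] by simp
  then show ?thesis
    by (meson angle_eq_sym angle_eq_trans)
qed

lemma exists_pos_angle_eq: "\<exists>t > 0. angle_eq t \<phi>"
proof -
  define k where "k = 1 - \<lfloor>\<phi> / (2 * pi)\<rfloor>"
  have "of_int \<lfloor>\<phi> / (2 * pi)\<rfloor> * (2 * pi) \<le> \<phi>"
    using pi_gt_zero by (simp add: pos_le_divide_eq [symmetric])
  then have "\<phi> + 2 * pi * of_int k > 0"
    by (simp add: k_def algebra_simps) (use pi_gt_zero in linarith)
  then show ?thesis
    by (blast intro: angle_eq_add_2pi_int)
qed

lemma config_eq_refl [simp]: "config_eq c c"
  by (simp add: config_eq_def)

lemma config_eq_trans: "config_eq c c' \<Longrightarrow> config_eq c' c'' \<Longrightarrow> config_eq c c''"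
  unfolding config_eq_def by (metis angle_eq_trans)

lemma config_eq_pointwise:
  assumes "\<And>j x y \<theta>. c j = (x, y, \<theta>) \<Longrightarrow>
             \<exists>\<theta>'. c' j = (x, y, \<theta>') \<and> angle_eq \<theta> \<theta>'"
  shows "config_eq c c'"
  unfolding config_eq_def
proof
  fix j
  obtain x y \<theta> where "c j = (x, y, \<theta>)" by (cases "c j") auto
  with assms show "fst (c j) = fst (c' j) \<and> fst (snd (c j)) = fst (snd (c' j))
      \<and> angle_eq (snd (snd (c j))) (snd (snd (c' j)))"
    by force
qed

lemma exec_seq_Nil [simp]: "exec_seq \<alpha> m r [] c = c"
  by (simp add: exec_seq_def)

lemma exec_seq_Cons [simp]:
  "exec_seq \<alpha> m r ((k, t) # s) c = exec_seq \<alpha> m r s (move \<alpha> m r k t c)"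
  by (simp add: exec_seq_def)

lemma exec_seq_append:
  "exec_seq \<alpha> m r (s @ s') c = exec_seq \<alpha> m r s' (exec_seq \<alpha> m r s c)"
  by (simp add: exec_seq_def)

lemma realizes_exec_seq:
  "admissible_seq m s \<Longrightarrow> realizes \<alpha> m r (exec_seq \<alpha> m r s)"
  unfolding realizes_def by (blast intro: config_eq_refl)

lemma realizes_cong:
  assumes "realizes \<alpha> m r F" and "\<And>c. config_eq (F c) (G c)"
  shows "realizes \<alpha> m r G"
  using assms unfolding realizes_def by (blast intro: config_eq_trans)

lemma realizes_comp:
  assumes F: "realizes \<alpha> m r F" and G: "realizes \<alpha> m r G"
    and G_cong: "\<And>c c'. config_eq c c' \<Longrightarrow> config_eq (G c) (G c')"
  shows "realizes \<alpha> m r (\<lambda>c. G (F c))"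
proof -
  obtain s where s: "admissible_seq m s" "\<And>c. config_eq (exec_seq \<alpha> m r s c) (F c)"
    using F by (auto simp: realizes_def)
  obtain s' where s': "admissible_seq m s'" "\<And>c. config_eq (exec_seq \<alpha> m r s' c) (G c)"
    using G by (auto simp: realizes_def)
  have "config_eq (exec_seq \<alpha> m r (s @ s') c) (G (F c))" for c
    unfolding exec_seq_append
    by (rule config_eq_trans [OF s'(2) G_cong [OF s(2)]])
  moreover have "admissible_seq m (s @ s')"
    using s(1) s'(1) by (auto simp: admissible_seq_def)
  ultimately show ?thesis
    unfolding realizes_def by blast
qed

lemma h_eff_add: "h_eff \<alpha> i a (h_eff \<alpha> i b c) = h_eff \<alpha> i (b + a) c"
  by (auto simp: h_eff_def fun_eq_iff split: prod.split)

lemma h_eff_zero [simp]: "h_eff \<alpha> i 0 c = c"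
  by (auto simp: h_eff_def fun_eq_iff split: prod.split)

lemma h_eff_config_eq:
  assumes "config_eq c c'"
  shows "config_eq (h_eff \<alpha> i a c) (h_eff \<alpha> i a c')"
proof (rule config_eq_pointwise)
  fix j x y \<theta>
  assume hj: "h_eff \<alpha> i a c j = (x, y, \<theta>)"
  obtain x0 y0 \<theta>0 \<theta>0' where c: "c j = (x0, y0, \<theta>0)" and c': "c' j = (x0, y0, \<theta>0')"
    and eq: "angle_eq \<theta>0 \<theta>0'"
    using assms unfolding config_eq_def by (metis prod.collapse)
  have "angle_eq (\<theta>0 + a) (\<theta>0' + a)"
    using eq by (simp add: angle_eq_add)
  with hj eq show "\<exists>\<theta>'. h_eff \<alpha> i a c' j = (x, y, \<theta>') \<and> angle_eq \<theta> \<theta>'"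
    by (auto simp: h_eff_def c c')
qed

lemma realizes_h_eff:
  assumes "r > 0" "1 \<le> i" "i < m"
  shows "realizes \<alpha> m r (h_eff \<alpha> i \<phi>)"
proof -
  obtain t where t: "t > 0" "angle_eq t \<phi>"
    using exists_pos_angle_eq by blast
  define D where "D = r * t / 2"
  let ?s = "[(i, D), (m, pi), (i, D), (m, pi)]"
  have "D > 0"
    using assms t by (simp add: D_def)
  with assms have "realizes \<alpha> m r (exec_seq \<alpha> m r ?s)"
    by (intro realizes_exec_seq) (auto simp: admissible_seq_def)
  moreover have "config_eq (exec_seq \<alpha> m r ?s c) (h_eff \<alpha> i \<phi> c)" for c
  proof (rule config_eq_pointwise)
    fix j x y \<theta>
    assume sj: "exec_seq \<alpha> m r ?s c j = (x, y, \<theta>)"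
    obtain x0 y0 \<theta>0 where c: "c j = (x0, y0, \<theta>0)" by (cases "c j") auto
    have "\<theta>0 + D / r + pi + D / r + pi = \<theta>0 + t + 2 * pi"
      using assms by (simp add: D_def)
    then have "exec_seq \<alpha> m r ?s c j =
        (if \<alpha> i j then (x0, y0, \<theta>0 + 2 * pi) else (x0, y0, \<theta>0 + t + 2 * pi))"
      using assms by (simp add: move_def c cos_add sin_add)
    with sj show "\<exists>\<theta>'. h_eff \<alpha> i \<phi> c j = (x, y, \<theta>') \<and> angle_eq \<theta> \<theta>'"
      using angle_eq_add [OF angle_eq_refl t(2), of \<theta>0]
      by (auto simp: h_eff_def c split: if_splits)
  qed
  ultimately show ?thesis
    by (rule realizes_cong)
qed

lemma move_eq_h_eff_g_eff:
  "k \<noteq> m \<Longrightarrow> move \<alpha> m r k d c = h_eff \<alpha> k (d / r) (g_eff \<alpha> k d c)"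
  by (auto simp: move_def h_eff_def g_eff_def fun_eq_iff split: prod.split)

lemma g_eff_zero [simp]: "g_eff \<alpha> i 0 c = c"
  by (auto simp: g_eff_def fun_eq_iff split: prod.split)

lemma exec_seq_reversed_drive:
  assumes "k \<noteq> m"
  shows "config_eq (exec_seq \<alpha> m r [(m, pi), (k, d), (m, pi)] c)
                   (h_eff \<alpha> k (d / r) (g_eff \<alpha> k (- d) c))"
proof (rule config_eq_pointwise)
  fix j x y \<theta>
  assume sj: "exec_seq \<alpha> m r [(m, pi), (k, d), (m, pi)] c j = (x, y, \<theta>)"
  obtain x0 y0 \<theta>0 where c: "c j = (x0, y0, \<theta>0)" by (cases "c j") auto
  have "exec_seq \<alpha> m r [(m, pi), (k, d), (m, pi)] c j =
      (if \<alpha> k j then (x0 - d * cos \<theta>0, y0 - d * sin \<theta>0, \<theta>0 + 2 * pi)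
       else (x0, y0, \<theta>0 + d / r + 2 * pi))"
    using assms by (simp add: move_def c cos_add sin_add)
  with sj show "\<exists>\<theta>'. h_eff \<alpha> k (d / r) (g_eff \<alpha> k (- d) c) j = (x, y, \<theta>') \<and> angle_eq \<theta> \<theta>'"
    by (auto simp: h_eff_def g_eff_def c split: if_splits)
qed

lemma realizes_g_eff_if_rotated:
  assumes "r > 0" "1 \<le> i" "i < m"
    and "realizes \<alpha> m r (\<lambda>c. h_eff \<alpha> i a (g_eff \<alpha> i d c))"
  shows "realizes \<alpha> m r (g_eff \<alpha> i d)"
proof -
  have "realizes \<alpha> m r (\<lambda>c. h_eff \<alpha> i (- a) (h_eff \<alpha> i a (g_eff \<alpha> i d c)))"
    by (rule realizes_comp [OF assms(4) realizes_h_eff [OF assms(1-3)] h_eff_config_eq])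
  then show ?thesis
    by (simp add: h_eff_add)
qed

lemma realizes_g_eff:
  assumes "r > 0" "1 \<le> i" "i < m"
  shows "realizes \<alpha> m r (g_eff \<alpha> i d)"
proof (cases d "0 :: real" rule: linorder_cases)
  case less
  have "realizes \<alpha> m r (exec_seq \<alpha> m r [(m, pi), (i, - d), (m, pi)])"
    using assms less by (intro realizes_exec_seq) (auto simp: admissible_seq_def)
  then have "realizes \<alpha> m r (\<lambda>c. h_eff \<alpha> i (- d / r) (g_eff \<alpha> i d c))"
    by (rule realizes_cong) (use assms exec_seq_reversed_drive [of i m \<alpha> r "- d"] in simp)
  with assms show ?thesis
    by (rule realizes_g_eff_if_rotated)
next
  case equal
  show ?thesis
    by (rule realizes_cong [OF realizes_h_eff [OF assms, of \<alpha> 0]]) (simp add: equal)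
next
  case greater
  have "realizes \<alpha> m r (exec_seq \<alpha> m r [(i, d)])"
    using assms greater by (intro realizes_exec_seq) (auto simp: admissible_seq_def)
  then have "realizes \<alpha> m r (\<lambda>c. h_eff \<alpha> i (d / r) (g_eff \<alpha> i d c))"
    by (rule realizes_cong) (use assms in \<open>simp add: move_eq_h_eff_g_eff\<close>)
  with assms show ?thesis
    by (rule realizes_g_eff_if_rotated)
qed

theorem mainTheorem3:
  fixes \<alpha> :: "nat \<Rightarrow> 'r::finite \<Rightarrow> bool" and m :: nat and r :: real
  assumes r_pos: "r > 0"
    and distinct_patterns: "\<And>j j'. j \<noteq> j' \<Longrightarrow> \<exists>i\<in>{1..<m}. \<alpha> i j \<noteq> \<alpha> i j'"
    and not_all_zero: "\<And>j. \<exists>i\<in>{1..<m}. \<alpha> i j"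
    and not_all_one: "\<And>j. \<exists>i\<in>{1..<m}. \<not> \<alpha> i j"
    and Gm_empty: "\<And>j. \<not> \<alpha> m j"
  shows "\<forall>i\<in>{1..<m}. \<forall>\<phi> d :: real.
           realizes \<alpha> m r (h_eff \<alpha> i \<phi>) \<and> realizes \<alpha> m r (g_eff \<alpha> i d)"
  using r_pos by (auto intro: realizes_h_eff realizes_g_eff)

end
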